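(* (1) Given a family $(\ell_{s,t})_{(s,t)\in\Delta}$ of transition kernels of a branching process on $\mathbb N_0^*$, the functions $F_{s,t}(z)=\sum_{n\ge0}\ell_{s,t}(1,\{n\})z^n$, $z\in\mathbb D$, form a topological reverse evolution family in $\mathbb D$ contained in $\mathcal{PGF}$. (2) Conversely, given a topological reverse evolution family $(F_{s,t})_{(s,t)\in\Delta}$ in $\mathbb D$ contained in $\mathcal{PGF}$, there exists a unique family $(\ell_{s,t})_{(s,t)\in\Delta}$ of transition kernels of a branching process on $\mathbb N_0^*$ such that $F_{s,t}(z)=\sum_{n\ge0}\ell_{s,t}(1,\{n\})z^n$ for all $z\in\mathbb D$, $(s,t)\in\Delta$.
   Context: $\Delta=\{(s,t):0\le s\le t\}$, $\mathbb D=\{|z|<1\}$, $\mathbb N_0=\{0,1,2,\dots\}$, $\mathbb N_0^*=\mathbb N_0\cup\{\infty\}$ with its natural compact topology. A family of transition kernels of a branching process on $\mathbb N_0^*$ is a family $(\ell_{s,t})_{(s,t)\in\Delta}$ of transition kernels on $\mathbb N_0^*$ with: (L1) $\ell_{s,s}(n,\cdot)=\delta_n$; (L2) $\ell_{s,t}\star\ell_{t,u}=\ell_{s,u}$ for $s\le t\le u$, where $(k\star l)(x,B)=\int l(y,B)k(x,\mathrm dy)$; (L3) for each $n\in\mathbb N_0$, $(s,t)\mapsto\ell_{s,t}(n,\cdot)$ is weakly continuous into probability measures on $\mathbb N_0^*$; (L4) $\ell_{s,t}(m,\cdot)\ast\ell_{s,t}(n,\cdot)=\ell_{s,t}(m+n,\cdot)$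 for $m,n\in\mathbb N_0$; (L5) $\ell_{s,t}(0,\cdot)=\delta_0$; (L6) $\ell_{s,t}(\infty,\cdot)=\delta_\infty$. $\mathcal{PGF}$ is the set of power series $\sum_{n\ge0}p_nz^n$ with $p_n\ge0$, $\sum p_n\le1$, excluding the constant $1$; it is a subset of ${\sf Hol}(\mathbb D,\mathbb D)$. A topological reverse evolution family in $\mathbb D$ is $(F_{s,t})\subset{\sf Hol}(\mathbb D,\mathbb D)$ with $F_{s,s}={\rm id}$, $F_{s,u}=F_{s,t}\circ F_{t,u}$ ($s\le t\le u$), and $(s,t)\mapsto F_{s,t}$ continuous for locally uniform convergence. *)

theory Defs
  imports "HOL-Probability.Probability" "HOL-Library.Extended_Nat"
begin

definition Delta :: "(real \<times> real) set" where
  "Delta = {(s, t). 0 \<le> s \<and> s \<le> t}"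

abbreviation unit_disc :: "complex set" where
  "unit_disc \<equiv> ball 0 1"

text \<open>Transition kernels on N_0^* (type enat, with its order topology, i.e. the
  one-point compactification of N_0).  Since N_0^* is countable and its Borel
  sigma-algebra is the power set, a transition kernel is a map
  enat => enat pmf.\<close>

definition kernel_comp :: "('a \<Rightarrow> 'a pmf) \<Rightarrow> ('a \<Rightarrow> 'a pmf) \<Rightarrow> ('a \<Rightarrow> 'a pmf)" where
  "kernel_comp k l = (\<lambda>x. bind_pmf (k x) l)"

definition conv_pmf :: "enat pmf \<Rightarrow> enat pmf \<Rightarrow> enat pmf" where
  "conv_pmf p q = map_pmf (\<lambda>(a, b). a + b) (pair_pmf p q)"

definition branching_kernels :: "(real \<Rightarrow> real \<Rightarrow> enat \<Rightarrow> enat pmf) \<Rightarrow> bool" where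
  "branching_kernels L \<longleftrightarrow>
     (\<forall>s n. 0 \<le> s \<longrightarrow> L s s n = return_pmf n) \<and>
     (\<forall>s t u. 0 \<le> s \<and> s \<le> t \<and> t \<le> u \<longrightarrow> kernel_comp (L s t) (L t u) = L s u) \<and>
     (\<forall>n::nat. \<forall>f::enat \<Rightarrow> real. continuous_on UNIV f \<longrightarrow>
        continuous_on Delta (\<lambda>(s, t). measure_pmf.expectation (L s t (enat n)) f)) \<and>
     (\<forall>(s, t)\<in>Delta. \<forall>m n::nat.
        conv_pmf (L s t (enat m)) (L s t (enat n)) = L s t (enat (m + n))) \<and>
     (\<forall>(s, t)\<in>Delta. L s t 0 = return_pmf 0) \<and>
     (\<forall>(s, t)\<in>Delta. L s t \<infinity> = return_pmf \<infinity>)"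

definition gen_fun :: "(real \<Rightarrow> real \<Rightarrow> enat \<Rightarrow> enat pmf) \<Rightarrow> real \<Rightarrow> real \<Rightarrow> complex \<Rightarrow> complex" where
  "gen_fun L s t z = (\<Sum>n. complex_of_real (pmf (L s t 1) (enat n)) * z ^ n)"

definition in_PGF :: "(complex \<Rightarrow> complex) \<Rightarrow> bool" where
  "in_PGF F \<longleftrightarrow>
     (\<exists>p :: nat \<Rightarrow> real. (\<forall>n. 0 \<le> p n) \<and> summable p \<and> suminf p \<le> 1 \<and>
        (\<forall>z\<in>unit_disc. F z = (\<Sum>n. complex_of_real (p n) * z ^ n))) \<and>
     \<not> (\<forall>z\<in>unit_disc. F z = 1)"

definition top_rev_evol_family :: "(real \<Rightarrow> real \<Rightarrow> complex \<Rightarrow> complex) \<Rightarrow> bool" where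
  "top_rev_evol_family F \<longleftrightarrow>
     (\<forall>(s, t)\<in>Delta. F s t holomorphic_on unit_disc \<and> F s t ` unit_disc \<subseteq> unit_disc) \<and>
     (\<forall>s z. 0 \<le> s \<and> z \<in> unit_disc \<longrightarrow> F s s z = z) \<and>
     (\<forall>s t u z. 0 \<le> s \<and> s \<le> t \<and> t \<le> u \<and> z \<in> unit_disc \<longrightarrow> F s u z = F s t (F t u z)) \<and>
     (\<forall>st0\<in>Delta. \<forall>K. compact K \<and> K \<subseteq> unit_disc \<longrightarrow>
        uniform_limit K (\<lambda>(s, t). F s t) (F (fst st0) (snd st0)) (at st0 within Delta))"

end

theory Submission
  imports Defs "HOL-Complex_Analysis.Complex_Analysis"
begin

text \<open>
  By (L4)--(L6) the kernel started from \<open>m\<close> individuals is the \<open>m\<close>-fold convolution power of the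
  offspring law \<open>l\<^sub>s\<^sub>,\<^sub>t(1, \<cdot>)\<close>, so a branching kernel is determined by its offspring law, and
  composing kernels amounts to composing generating functions. This gives the evolution property
  on the real segment \<open>[0, 1)\<close>, and the identity theorem extends it to the disc.

  A law on \<open>\<nat>\<^sub>0\<^sup>*\<close> is determined by its generating function on \<open>(0, 1)\<close>: the coefficients of a
  subprobability series are recovered one at a time as \<open>x \<rightarrow> 0\<close>, and the mass at \<open>\<infinity>\<close> is what the
  coefficients miss. The same estimate turns convergence on \<open>(0, 1)\<close> into coefficientwise
  convergence, which in turn gives locally uniform convergence on the disc and convergence of
  expectations of continuous functions on \<open>\<nat>\<^sub>0\<^sup>*\<close>; this carries continuity in \<open>(s, t)\<close> in both
  directions.

  Finally \<open>F\<^sub>s\<^sub>,\<^sub>t\<close> maps the disc into itself because the extinction probability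
  \<open>l\<^sub>s\<^sub>,\<^sub>t(1, {0})\<close> is less than 1: otherwise a pair \<open>s < t\<close> of minimal length with extinction
  probability 1 could be bisected, since a generating function with \<open>p\<^sub>0 < 1\<close> stays below 1
  on \<open>[0, 1)\<close>.
\<close>

section \<open>Subprobability sequences\<close>

definition subprob_seq :: "(nat \<Rightarrow> real) \<Rightarrow> bool" where
  "subprob_seq c \<longleftrightarrow> (\<forall>n. 0 \<le> c n) \<and> summable c \<and> suminf c \<le> 1"

lemma subprob_seqD:
  assumes "subprob_seq c"
  shows "0 \<le> c n" "summable c" "suminf c \<le> 1"
  using assms by (auto simp: subprob_seq_def)

lemma subprob_seq_shift:
  assumes "subprob_seq c"
  shows "subprob_seq (\<lambda>n. c (n + N))"
proof -
  note c = subprob_seqD[OF assms]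
  have "summable (\<lambda>n. c (n + N))"
    using c(2) by (rule summable_ignore_initial_segment)
  moreover have "(\<Sum>n. c (n + N)) \<le> suminf c"
    using suminf_split_initial_segment[OF c(2), of N] sum_nonneg[of "{..<N}" c] c(1) by simp
  ultimately show ?thesis
    using c by (simp add: subprob_seq_def)
qed

lemma summable_norm_subprob_seq_scaleR:
  fixes h :: "nat \<Rightarrow> 'b::real_normed_vector"
  assumes "subprob_seq c" "\<And>n. norm (h n) \<le> B"
  shows "summable (\<lambda>n. norm (c n *\<^sub>R h n))"
proof (rule summable_comparison_test[OF _ summable_mult2[OF subprob_seqD(2)[OF assms(1)], of B]])
  show "\<exists>N. \<forall>n\<ge>N. norm (norm (c n *\<^sub>R h n)) \<le> c n * B"
    using assms by (auto intro!: mult_left_mono simp: subprob_seqD)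
qed

lemma summable_subprob_seq_scaleR:
  fixes h :: "nat \<Rightarrow> 'b::banach"
  shows "subprob_seq c \<Longrightarrow> (\<And>n. norm (h n) \<le> B) \<Longrightarrow> summable (\<lambda>n. c n *\<^sub>R h n)"
  by (rule summable_norm_cancel[OF summable_norm_subprob_seq_scaleR])

lemma norm_suminf_tail_subprob_seq_le:
  fixes h :: "nat \<Rightarrow> 'b::banach"
  assumes c: "subprob_seq c" and B: "\<And>n. norm (h n) \<le> B"
    and tail: "\<And>n. N \<le> n \<Longrightarrow> norm (h n) \<le> \<epsilon>"
  shows "norm ((\<Sum>n. c n *\<^sub>R h n) - (\<Sum>n<N. c n *\<^sub>R h n)) \<le> \<epsilon>"
proof -
  note cN = subprob_seqD[OF subprob_seq_shift[OF c, of N]]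
  have "(\<Sum>n. c n *\<^sub>R h n) - (\<Sum>n<N. c n *\<^sub>R h n) = (\<Sum>n. c (n + N) *\<^sub>R h (n + N))"
    using suminf_split_initial_segment[OF summable_subprob_seq_scaleR[of c h B, OF c B], of N] by simp
  also have "norm \<dots> \<le> (\<Sum>n. norm (c (n + N) *\<^sub>R h (n + N)))"
    by (intro summable_norm summable_norm_subprob_seq_scaleR[OF subprob_seq_shift[OF c], of _ B] B)
  also have "\<dots> \<le> (\<Sum>n. c (n + N) * \<epsilon>)"
    by (intro suminf_le summable_mult2 cN summable_norm_subprob_seq_scaleR[OF subprob_seq_shift[OF c], of _ B] B)
       (simp add: cN(1) mult_left_mono tail)
  also have "\<dots> = (\<Sum>n. c (n + N)) * \<epsilon>"
    by (rule suminf_mult2[symmetric, OF cN(2)])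
  also have "\<dots> \<le> \<epsilon>"
    using order_trans[OF norm_ge_zero tail[of N]] cN(3) suminf_nonneg[OF cN(2) cN(1)]
    by (intro mult_left_le_one_le) auto
  finally show ?thesis .
qed

lemma norm_suminf_diff_subprob_seq_le:
  fixes h :: "nat \<Rightarrow> 'b::banach"
  assumes c: "subprob_seq c" and d: "subprob_seq d" and B: "\<And>n. norm (h n) \<le> B"
    and tail: "\<And>n. N \<le> n \<Longrightarrow> norm (h n) \<le> \<epsilon>"
  shows "norm ((\<Sum>n. c n *\<^sub>R h n) - (\<Sum>n. d n *\<^sub>R h n)) \<le> 2 * \<epsilon> + (\<Sum>n<N. \<bar>c n - d n\<bar>) * B"
proof -
  define P where "P g = (\<Sum>n<N. g n *\<^sub>R h n)" for g
  have "norm (P c - P d) = norm (\<Sum>n<N. (c n - d n) *\<^sub>R h n)"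
    by (simp add: P_def sum_subtractf scaleR_diff_left)
  also have "\<dots> \<le> (\<Sum>n<N. \<bar>c n - d n\<bar> * B)"
    by (intro sum_norm_le) (simp add: mult_left_mono B)
  finally have "norm (P c - P d) \<le> (\<Sum>n<N. \<bar>c n - d n\<bar>) * B"
    by (simp add: sum_distrib_right)
  moreover have "norm ((\<Sum>n. c n *\<^sub>R h n) - (\<Sum>n. d n *\<^sub>R h n)) \<le>
      norm ((\<Sum>n. c n *\<^sub>R h n) - P c) + norm ((\<Sum>n. d n *\<^sub>R h n) - P d) + norm (P c - P d)"
    using norm_diff_triangle_ineq[of "(\<Sum>n. c n *\<^sub>R h n) - P c" "P c" "(\<Sum>n. d n *\<^sub>R h n) - P d" "P d"]
      norm_triangle_ineq4[of "(\<Sum>n. c n *\<^sub>R h n) - P c" "(\<Sum>n. d n *\<^sub>R h n) - P d"]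
    by simp
  ultimately show ?thesis
    using norm_suminf_tail_subprob_seq_le[of c h B N \<epsilon>, OF c B tail]
      norm_suminf_tail_subprob_seq_le[of d h B N \<epsilon>, OF d B tail]
    unfolding P_def by linarith
qed

lemma uniform_limit_subprob_series:
  fixes h :: "'i \<Rightarrow> nat \<Rightarrow> 'b::banach"
  assumes c: "\<And>a. subprob_seq (c a)" and d: "subprob_seq d"
    and lim: "\<And>n. ((\<lambda>a. c a n) \<longlongrightarrow> d n) F"
    and h: "\<And>i n. i \<in> K \<Longrightarrow> norm (h i n) \<le> b n" and b: "b \<longlonglongrightarrow> 0"
  shows "uniform_limit K (\<lambda>a i. \<Sum>n. c a n *\<^sub>R h i n) (\<lambda>i. \<Sum>n. d n *\<^sub>R h i n) F"
proof (rule uniform_limitI)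
  fix e :: real assume e: "0 < e"
  obtain B where B: "\<And>n. norm (b n) \<le> B"
    using convergent_imp_Bseq[OF convergentI[OF b]] unfolding Bseq_def by blast
  obtain N where N: "\<And>n. N \<le> n \<Longrightarrow> \<bar>b n\<bar> < e / 4"
    using LIMSEQ_D[OF b, of "e / 4"] e by auto
  have "((\<lambda>a. (\<Sum>n<N. \<bar>c a n - d n\<bar>) * B) \<longlongrightarrow> (\<Sum>n<N. \<bar>d n - d n\<bar>) * B) F"
    by (intro tendsto_intros lim)
  then have "\<forall>\<^sub>F a in F. (\<Sum>n<N. \<bar>c a n - d n\<bar>) * B < e / 2"
    using e by (intro order_tendstoD) auto
  then show "\<forall>\<^sub>F a in F. \<forall>i\<in>K. dist (\<Sum>n. c a n *\<^sub>R h i n) (\<Sum>n. d n *\<^sub>R h i n) < e"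
  proof (rule eventually_mono, intro ballI)
    fix a i assume close: "(\<Sum>n<N. \<bar>c a n - d n\<bar>) * B < e / 2" and i: "i \<in> K"
    have hB: "norm (h i n) \<le> B" for n
      using h[OF i, of n] B[of n] abs_ge_self[of "b n"] by simp
    have hN: "norm (h i n) \<le> e / 4" if "N \<le> n" for n
      using h[OF i, of n] N[OF that] by linarith
    have "norm ((\<Sum>n. c a n *\<^sub>R h i n) - (\<Sum>n. d n *\<^sub>R h i n)) \<le>
        2 * (e / 4) + (\<Sum>n<N. \<bar>c a n - d n\<bar>) * B"
      by (rule norm_suminf_diff_subprob_seq_le[OF c d hB hN])
    then show "dist (\<Sum>n. c a n *\<^sub>R h i n) (\<Sum>n. d n *\<^sub>R h i n) < e"
      using close by (simp add: dist_norm)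
  qed
qed

lemma abs_suminf_power_tail_le:
  assumes "subprob_seq c" "0 \<le> x" "x \<le> 1"
  shows "\<bar>(\<Sum>n. c n * x ^ n) - (\<Sum>n<N. c n * x ^ n)\<bar> \<le> x ^ N"
proof -
  have "norm ((\<Sum>n. c n *\<^sub>R x ^ n) - (\<Sum>n<N. c n *\<^sub>R x ^ n)) \<le> x ^ N"
    by (rule norm_suminf_tail_subprob_seq_le[OF assms(1), of _ 1])
       (use assms power_decreasing[of N _ x] in \<open>auto simp: power_le_one\<close>)
  then show ?thesis
    by simp
qed

text \<open>Induction on \<open>N\<close>: once the lower coefficients converge, the \<open>N\<close>-th one is read off the
  remaining tail divided by \<open>x\<^sup>N\<close>, up to an error of order \<open>x\<close>.\<close>

lemma tendsto_coeff_of_tendsto_power_series: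
  fixes c :: "'a \<Rightarrow> nat \<Rightarrow> real"
  assumes c: "\<And>a. subprob_seq (c a)" and d: "subprob_seq d"
    and lim: "\<And>x. 0 < x \<Longrightarrow> x < 1 \<Longrightarrow> ((\<lambda>a. \<Sum>n. c a n * x ^ n) \<longlongrightarrow> (\<Sum>n. d n * x ^ n)) F"
  shows "((\<lambda>a. c a N) \<longlongrightarrow> d N) F"
proof (induction N rule: less_induct)
  case (less N)
  define U where "U g x = (\<Sum>n. g n * x ^ n) - (\<Sum>n<N. g n * x ^ n)" for g :: "nat \<Rightarrow> real" and x :: real
  define T where "T g x = (\<Sum>n. g n * x ^ n) - (\<Sum>n<Suc N. g n * x ^ n)" for g :: "nat \<Rightarrow> real" and x :: real
  have U_T: "U g x = g N * x ^ N + T g x" for g x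
    by (simp add: U_def T_def)
  have T_le: "\<bar>T g x\<bar> \<le> x ^ Suc N" if "subprob_seq g" "0 \<le> x" "x \<le> 1" for g x
    unfolding T_def by (rule abs_suminf_power_tail_le[OF that])
  have U_lim: "((\<lambda>a. U (c a) x) \<longlongrightarrow> U d x) F" if "0 < x" "x < 1" for x
    unfolding U_def by (intro tendsto_diff lim that tendsto_sum tendsto_mult_right less.IH) auto
  show ?case
  proof (rule tendstoI)
    fix e :: real assume e: "0 < e"
    define x where "x = min (1/2) (e/4)"
    have x: "0 < x" "x < 1" "x \<le> e / 4"
      using e by (auto simp: x_def)
    have "\<forall>\<^sub>F a in F. dist (U (c a) x) (U d x) < x ^ N * (e / 2)"
      using U_lim[OF x(1,2)] x e by (intro tendstoD) auto
    then show "\<forall>\<^sub>F a in F. dist (c a N) (d N) < e"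
    proof (rule eventually_mono)
      fix a assume U_close: "dist (U (c a) x) (U d x) < x ^ N * (e / 2)"
      have "\<bar>c a N - d N\<bar> * x ^ N = \<bar>(c a N - d N) * x ^ N\<bar>"
        using x by (simp add: abs_mult)
      also have "\<dots> = \<bar>(U (c a) x - U d x) - T (c a) x + T d x\<bar>"
        by (simp add: U_T algebra_simps)
      also have "\<dots> \<le> \<bar>U (c a) x - U d x\<bar> + \<bar>T (c a) x\<bar> + \<bar>T d x\<bar>"
        by arith
      also have "\<dots> < x ^ N * (e / 2) + x ^ Suc N + x ^ Suc N"
        using U_close T_le[OF c, of x a] T_le[OF d, of x] x by (simp add: dist_real_def)
      also have "\<dots> = x ^ N * (e / 2) + (2 * x) * x ^ N"
        by simp
      also have "\<dots> \<le> x ^ N * (e / 2) + (e / 2) * x ^ N"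
        using x by (intro add_left_mono mult_right_mono) auto
      also have "\<dots> = e * x ^ N"
        by simp
      finally show "dist (c a N) (d N) < e"
        using x by (simp add: dist_real_def)
    qed
  qed
qed

lemma suminf_subprob_seq_power_less_1:
  assumes c: "subprob_seq c" and "c 0 < 1" "0 \<le> x" "x < 1"
  shows "(\<Sum>n. c n * x ^ n) < 1"
proof -
  note cs = subprob_seqD[OF c]
  have "(\<Sum>n. c n * x ^ n) \<le> (\<Sum>n. c n * x + (if n = 0 then c 0 * (1 - x) else 0))"
  proof (rule suminf_le)
    show "summable (\<lambda>n. c n * x ^ n)"
      using summable_subprob_seq_scaleR[OF c, of "\<lambda>n. x ^ n" 1] assms by (simp add: power_le_one)
    show "summable (\<lambda>n. c n * x + (if n = 0 then c 0 * (1 - x) else 0))"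
      by (intro summable_add summable_mult2 cs(2) summable_single)
    fix n
    show "c n * x ^ n \<le> c n * x + (if n = 0 then c 0 * (1 - x) else 0)"
    proof (cases "n = 0")
      case False
      then have "x ^ n \<le> x ^ 1"
        using assms by (intro power_decreasing) auto
      then show ?thesis
        using False cs(1)[of n] by (simp add: mult_left_mono)
    qed (simp add: algebra_simps)
  qed
  also have "\<dots> = suminf c * x + c 0 * (1 - x)"
    by (subst suminf_add[symmetric]) (auto intro!: summable_mult2 cs(2) summable_single
        simp: suminf_mult2[symmetric, OF cs(2)] sums_unique[OF sums_single, symmetric])
  also have "\<dots> < 1"
  proof -
    have "suminf c * x \<le> x"
      using assms cs(3) by (intro mult_left_le_one_le suminf_nonneg cs) auto
    moreover have "c 0 * (1 - x) < 1 - x"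
      using assms by simp
    ultimately show ?thesis
      by linarith
  qed
  finally show ?thesis .
qed

section \<open>Distributions on the extended naturals\<close>

lemma nn_integral_count_space_enat:
  fixes f :: "enat \<Rightarrow> ennreal"
  shows "(\<integral>\<^sup>+x. f x \<partial>count_space UNIV) = (\<Sum>n. f (enat n)) + f \<infinity>"
proof -
  have "(\<integral>\<^sup>+x. f x \<partial>count_space UNIV) =
      (\<integral>\<^sup>+x. f x * indicator (range enat) x \<partial>count_space UNIV) +
      (\<integral>\<^sup>+x. f x * indicator {\<infinity>} x \<partial>count_space UNIV)"
    by (subst nn_integral_add[symmetric]) (auto intro!: nn_integral_cong split: split_indicator enat.split)
  also have "(\<integral>\<^sup>+x. f x * indicator (range enat) x \<partial>count_space UNIV) = (\<integral>\<^sup>+x. f x \<partial>count_space (range enat))"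
    by (simp add: nn_integral_count_space_indicator)
  also have "\<dots> = (\<integral>\<^sup>+n. f (enat n) \<partial>count_space UNIV)"
    by (rule nn_integral_bij_count_space[symmetric]) (auto simp: bij_betw_def inj_on_def)
  also have "\<dots> = (\<Sum>n. f (enat n))"
    by (rule nn_integral_count_space_nat)
  also have "(\<integral>\<^sup>+x. f x * indicator {\<infinity>} x \<partial>count_space UNIV) = f \<infinity>"
    by (simp add: nn_integral_count_space_indicator[symmetric] nn_integral_count_space_finite)
  finally show ?thesis .
qed

lemma nn_integral_measure_pmf_enat:
  "(\<integral>\<^sup>+x. f x \<partial>measure_pmf p) =
     (\<Sum>n. ennreal (pmf p (enat n)) * f (enat n)) + ennreal (pmf p \<infinity>) * f \<infinity>"
  by (simp add: nn_integral_measure_pmf nn_integral_count_space_enat)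

lemma
  fixes p :: "enat pmf"
  shows summable_pmf_enat: "summable (\<lambda>n. pmf p (enat n))"
    and suminf_pmf_enat: "(\<Sum>n. pmf p (enat n)) + pmf p \<infinity> = 1"
proof -
  have total: "(\<Sum>n. ennreal (pmf p (enat n))) + ennreal (pmf p \<infinity>) = 1"
    using nn_integral_measure_pmf_enat[where f="\<lambda>_. 1" and p=p] by simp
  then have finite: "(\<Sum>n. ennreal (pmf p (enat n))) \<noteq> \<top>"
    by (metis ennreal_add_eq_top ennreal_one_neq_top)
  show summable: "summable (\<lambda>n. pmf p (enat n))"
    by (rule summable_suminf_not_top[OF _ finite]) simp
  have "ennreal ((\<Sum>n. pmf p (enat n)) + pmf p \<infinity>) = 1"
    using total by (simp add: suminf_ennreal2 summable suminf_nonneg)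
  then show "(\<Sum>n. pmf p (enat n)) + pmf p \<infinity> = 1"
    by (simp only: ennreal_eq_1)
qed

lemma subprob_seq_pmf_enat: "subprob_seq (\<lambda>n. pmf p (enat n))"
proof -
  have "(\<Sum>n. pmf p (enat n)) \<le> 1"
    using suminf_pmf_enat[of p] pmf_nonneg[of p \<infinity>] by linarith
  then show ?thesis
    by (simp add: subprob_seq_def summable_pmf_enat)
qed

definition pmf_of_subprob_seq :: "(nat \<Rightarrow> real) \<Rightarrow> enat pmf" where
  "pmf_of_subprob_seq c = embed_pmf (\<lambda>y. case y of enat n \<Rightarrow> c n | \<infinity> \<Rightarrow> 1 - suminf c)"

lemma pmf_pmf_of_subprob_seq:
  assumes c: "subprob_seq c"
  shows "pmf (pmf_of_subprob_seq c) (enat n) = c n"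
proof -
  note cs = subprob_seqD[OF c]
  define f where "f y = (case y of enat n \<Rightarrow> c n | \<infinity> \<Rightarrow> 1 - suminf c)" for y
  have "(\<integral>\<^sup>+y. ennreal (f y) \<partial>count_space UNIV) = ennreal (suminf c) + ennreal (1 - suminf c)"
    using cs by (simp add: nn_integral_count_space_enat f_def suminf_ennreal2)
  also have "\<dots> = 1"
    using cs suminf_nonneg[OF cs(2) cs(1)] by (simp flip: ennreal_plus)
  finally have "pmf (embed_pmf f) (enat n) = f (enat n)"
    using cs by (intro pmf_embed_pmf) (auto simp: f_def split: enat.split)
  moreover have "pmf_of_subprob_seq c = embed_pmf f"
    by (simp add: pmf_of_subprob_seq_def f_def[abs_def])
  ultimately show ?thesis
    by (simp add: f_def)
qed

lemma expectation_pmf_enat_nonneg: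
  fixes g :: "enat \<Rightarrow> real"
  assumes g: "\<And>y. 0 \<le> g y" "\<And>y. g y \<le> B"
  shows "measure_pmf.expectation p g = (\<Sum>n. pmf p (enat n) * g (enat n)) + pmf p \<infinity> * g \<infinity>"
proof -
  have summable: "summable (\<lambda>n. pmf p (enat n) * g (enat n))"
    using summable_subprob_seq_scaleR[OF subprob_seq_pmf_enat, of "\<lambda>n. g (enat n)" B] g by simp
  have "ennreal (measure_pmf.expectation p g) = (\<integral>\<^sup>+y. ennreal (g y) \<partial>measure_pmf p)"
    using g by (intro nn_integral_eq_integral[symmetric] measure_pmf.integrable_const_bound[where B=B]) auto
  also have "\<dots> = (\<Sum>n. ennreal (pmf p (enat n) * g (enat n))) + ennreal (pmf p \<infinity> * g \<infinity>)"
    using g by (simp add: nn_integral_measure_pmf_enat ennreal_mult)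
  also have "\<dots> = ennreal ((\<Sum>n. pmf p (enat n) * g (enat n)) + pmf p \<infinity> * g \<infinity>)"
    using g summable by (simp add: suminf_ennreal2 suminf_nonneg)
  finally have "ennreal (measure_pmf.expectation p g) =
      ennreal ((\<Sum>n. pmf p (enat n) * g (enat n)) + pmf p \<infinity> * g \<infinity>)" .
  then show ?thesis
    using g summable by (subst (asm) ennreal_inj) (auto intro!: integral_nonneg_AE suminf_nonneg add_nonneg_nonneg)
qed

lemma expectation_pmf_enat:
  fixes f :: "enat \<Rightarrow> real"
  assumes f: "\<And>y. \<bar>f y\<bar> \<le> B"
  shows "measure_pmf.expectation p f = f \<infinity> + (\<Sum>n. pmf p (enat n) * (f (enat n) - f \<infinity>))"
proof -
  have summable: "summable (\<lambda>n. pmf p (enat n) * (f (enat n) - f \<infinity>))"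
  proof -
    have "norm (f (enat n) - f \<infinity>) \<le> 2 * B" for n
      using f[of "enat n"] f[of \<infinity>] by simp
    then have "summable (\<lambda>n. pmf p (enat n) *\<^sub>R (f (enat n) - f \<infinity>))"
      by (rule summable_subprob_seq_scaleR[OF subprob_seq_pmf_enat])
    then show ?thesis
      by simp
  qed
  have "measure_pmf.expectation p (\<lambda>y. f y + B) = measure_pmf.expectation p f + B"
    using f by (simp add: measure_pmf.integrable_const_bound[where B=B])
  moreover have "measure_pmf.expectation p (\<lambda>y. f y + B) =
      (\<Sum>n. pmf p (enat n) * (f (enat n) + B)) + pmf p \<infinity> * (f \<infinity> + B)"
  proof (rule expectation_pmf_enat_nonneg)
    show "0 \<le> f y + B" "f y + B \<le> 2 * B" for y
      using f[of y] by auto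
  qed
  moreover have "(\<Sum>n. pmf p (enat n) * (f (enat n) + B)) =
      (\<Sum>n. pmf p (enat n) * (f (enat n) - f \<infinity>)) + (\<Sum>n. pmf p (enat n)) * (f \<infinity> + B)"
    by (subst suminf_mult2[OF summable_pmf_enat], subst suminf_add[OF summable summable_mult2[OF summable_pmf_enat]])
       (simp add: algebra_simps)
  moreover have "(f \<infinity> + B) * ((\<Sum>n. pmf p (enat n)) + pmf p \<infinity>) = f \<infinity> + B"
    by (simp add: suminf_pmf_enat)
  ultimately show ?thesis
    by (simp add: algebra_simps)
qed

lemma LIMSEQ_enat_infinity: "(\<lambda>n. enat n) \<longlonglongrightarrow> \<infinity>"
proof (rule order_tendstoI)
  fix y :: enat assume "y < \<infinity>"
  then obtain k where "y = enat k"
    by (cases y) auto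
  then show "\<forall>\<^sub>F n in sequentially. y < enat n"
    by (auto simp: eventually_sequentially intro: exI[of _ "Suc k"])
qed simp

lemma continuous_on_indicator_enat: "continuous_on UNIV (indicator {enat n} :: enat \<Rightarrow> real)"
proof -
  have "open (indicator {enat n} -` B :: enat set)" for B :: "real set"
  proof -
    have "indicator {enat n} -` B \<in> {{}, {enat n}, - {enat n}, UNIV}"
      by (cases "0 \<in> B"; cases "1 \<in> B") (auto simp: indicator_def of_bool_def split: if_splits)
    then show ?thesis
      using open_enat[of n] by (auto simp: open_Compl)
  qed
  then show ?thesis
    by (simp add: continuous_on_open_vimage)
qed

lemma tendsto_expectation_pmf_enat:
  fixes f :: "enat \<Rightarrow> real"
  assumes f: "continuous_on UNIV f"
    and lim: "\<And>n. ((\<lambda>a. pmf (q a) (enat n)) \<longlongrightarrow> pmf q0 (enat n)) F"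
  shows "((\<lambda>a. measure_pmf.expectation (q a) f) \<longlongrightarrow> measure_pmf.expectation q0 f) F"
proof -
  obtain B where B: "\<And>y. \<bar>f y\<bar> \<le> B"
    using compact_imp_bounded[OF compact_continuous_image[OF f compact_UNIV]]
    by (auto simp: bounded_iff)
  define h where "h n = f (enat n) - f \<infinity>" for n
  have "(\<lambda>n. f (enat n)) \<longlonglongrightarrow> f \<infinity>"
    by (rule continuous_on_tendsto_compose[OF f LIMSEQ_enat_infinity]) auto
  then have "(\<lambda>n. \<bar>h n\<bar>) \<longlonglongrightarrow> 0"
    unfolding h_def by (intro tendsto_rabs_zero) (simp add: LIM_zero)
  then have "uniform_limit {()} (\<lambda>a _. \<Sum>n. pmf (q a) (enat n) *\<^sub>R h n) (\<lambda>_. \<Sum>n. pmf q0 (enat n) *\<^sub>R h n) F"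
    by (intro uniform_limit_subprob_series[OF subprob_seq_pmf_enat subprob_seq_pmf_enat lim,
          where b="\<lambda>n. \<bar>h n\<bar>"]) auto
  then have "((\<lambda>a. f \<infinity> + (\<Sum>n. pmf (q a) (enat n) * h n)) \<longlongrightarrow> f \<infinity> + (\<Sum>n. pmf q0 (enat n) * h n)) F"
    by (intro tendsto_add tendsto_const) simp
  then show ?thesis
    by (simp add: expectation_pmf_enat[OF B] h_def)
qed

section \<open>Probability generating functions\<close>

definition power_enat :: "real \<Rightarrow> enat \<Rightarrow> ennreal" where
  "power_enat x y = (case y of enat n \<Rightarrow> ennreal (x ^ n) | \<infinity> \<Rightarrow> 0)"

lemma power_enat_simps [simp]:
  "power_enat x (enat n) = ennreal (x ^ n)"
  "power_enat x \<infinity> = 0"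
  by (simp_all add: power_enat_def)

lemma power_enat_add: "0 \<le> x \<Longrightarrow> power_enat x (a + b) = power_enat x a * power_enat x b"
  by (cases a; cases b) (simp_all add: power_add ennreal_mult)

definition pgf :: "enat pmf \<Rightarrow> real \<Rightarrow> real" where
  "pgf p x = (\<Sum>n. pmf p (enat n) * x ^ n)"

lemma summable_pgf: "\<bar>x\<bar> \<le> 1 \<Longrightarrow> summable (\<lambda>n. pmf p (enat n) * x ^ n)"
  using summable_subprob_seq_scaleR[OF subprob_seq_pmf_enat, of "\<lambda>n. x ^ n" 1]
  by (simp add: power_abs power_le_one)

lemma pgf_nonneg: "0 \<le> x \<Longrightarrow> x \<le> 1 \<Longrightarrow> 0 \<le> pgf p x"
  unfolding pgf_def by (intro suminf_nonneg summable_pgf) auto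

lemma pgf_le_1:
  assumes "0 \<le> x" "x \<le> 1"
  shows "pgf p x \<le> 1"
proof -
  have "pgf p x \<le> (\<Sum>n. pmf p (enat n))"
    unfolding pgf_def using assms
    by (intro suminf_le summable_pgf summable_pmf_enat) (auto intro!: mult_left_le power_le_one)
  also have "\<dots> \<le> 1"
    by (rule subprob_seqD(3)[OF subprob_seq_pmf_enat])
  finally show ?thesis .
qed

lemma nn_integral_power_enat:
  assumes "0 \<le> x" "x \<le> 1"
  shows "(\<integral>\<^sup>+y. power_enat x y \<partial>measure_pmf p) = ennreal (pgf p x)"
proof -
  have "(\<integral>\<^sup>+y. power_enat x y \<partial>measure_pmf p) = (\<Sum>n. ennreal (pmf p (enat n) * x ^ n))"
    using assms by (simp add: nn_integral_measure_pmf_enat ennreal_mult)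
  also have "\<dots> = ennreal (pgf p x)"
    unfolding pgf_def using assms by (intro suminf_ennreal2 summable_pgf) auto
  finally show ?thesis .
qed

lemma pgf_zero: "pgf p 0 = pmf p 0"
proof -
  have "(\<lambda>n. pmf p (enat n) * 0 ^ n) = (\<lambda>n. if n = 0 then pmf p (enat 0) else 0)"
    by auto
  then show ?thesis
    using sums_single[of 0 "\<lambda>_. pmf p (enat 0)"]
    by (simp add: pgf_def sums_iff zero_enat_def)
qed

lemma pgf_less_1: "pmf p 0 < 1 \<Longrightarrow> 0 \<le> x \<Longrightarrow> x < 1 \<Longrightarrow> pgf p x < 1"
  unfolding pgf_def
  by (rule suminf_subprob_seq_power_less_1[OF subprob_seq_pmf_enat]) (simp_all add: zero_enat_def)

lemma pgf_return_pmf: "0 \<le> x \<Longrightarrow> x \<le> 1 \<Longrightarrow> pgf (return_pmf (enat m)) x = x ^ m"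
  using nn_integral_power_enat[of x "return_pmf (enat m)"]
  by (simp add: nn_integral_return pgf_nonneg)

lemma pgf_return_pmf_zero: "0 \<le> x \<Longrightarrow> x \<le> 1 \<Longrightarrow> pgf (return_pmf 0) x = 1"
  using pgf_return_pmf[of x 0] by (simp add: zero_enat_def)

lemma pgf_conv_pmf:
  assumes "0 \<le> x" "x \<le> 1"
  shows "pgf (conv_pmf p q) x = pgf p x * pgf q x"
proof -
  have "ennreal (pgf (conv_pmf p q) x) = ennreal (pgf p x) * ennreal (pgf q x)"
    using assms
    by (simp add: nn_integral_power_enat[symmetric] conv_pmf_def nn_integral_pair_pmf'
        power_enat_add nn_integral_cmult nn_integral_multc)
  then show ?thesis
    using assms by (simp add: ennreal_mult'[symmetric] pgf_nonneg)
qed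

lemma pmf_enat_eqI:
  assumes "\<And>x. 0 < x \<Longrightarrow> x < 1 \<Longrightarrow> pgf p x = pgf q x"
  shows "p = q"
proof (rule pmf_eqI)
  have coeff: "pmf p (enat n) = pmf q (enat n)" for n
    using tendsto_coeff_of_tendsto_power_series[OF subprob_seq_pmf_enat subprob_seq_pmf_enat,
        of "\<lambda>_::nat. p" q sequentially n] assms
    by (simp add: pgf_def LIMSEQ_const_iff)
  then have "pmf p \<infinity> = pmf q \<infinity>"
    using suminf_pmf_enat[of p] suminf_pmf_enat[of q] by simp
  with coeff show "pmf p y = pmf q y" for y
    by (cases y) simp_all
qed

lemma pgf_pmf_of_subprob_seq: "subprob_seq c \<Longrightarrow> pgf (pmf_of_subprob_seq c) x = (\<Sum>n. c n * x ^ n)"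
  by (simp add: pgf_def pmf_pmf_of_subprob_seq)

lemma ennreal_pgf_bind_pmf:
  assumes "0 \<le> x" "x \<le> 1"
  shows "ennreal (pgf (bind_pmf p K) x) = (\<integral>\<^sup>+y. ennreal (pgf (K y) x) \<partial>measure_pmf p)"
  using assms by (simp add: nn_integral_power_enat[symmetric])

section \<open>Branching kernels\<close>

definition branching_kernel :: "(enat \<Rightarrow> enat pmf) \<Rightarrow> bool" where
  "branching_kernel K \<longleftrightarrow> K 0 = return_pmf 0 \<and> K \<infinity> = return_pmf \<infinity> \<and>
     (\<forall>m n. conv_pmf (K (enat m)) (K (enat n)) = K (enat (m + n)))"

lemma pgf_branching_kernel:
  assumes K: "branching_kernel K" and x: "0 \<le> x" "x \<le> 1"
  shows "pgf (K (enat m)) x = pgf (K 1) x ^ m"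
proof (induction m)
  case 0
  then show ?case
    using K x by (simp add: branching_kernel_def pgf_return_pmf_zero flip: zero_enat_def)
next
  case (Suc m)
  have "K (enat (Suc m)) = conv_pmf (K 1) (K (enat m))"
    using K by (simp add: branching_kernel_def one_enat_def)
  then show ?case
    using Suc x by (simp add: pgf_conv_pmf)
qed

lemma ennreal_pgf_branching_kernel:
  assumes K: "branching_kernel K" and x: "0 \<le> x" "x \<le> 1"
  shows "ennreal (pgf (K y) x) = power_enat (pgf (K 1) x) y"
proof (cases y)
  case (enat m)
  then show ?thesis
    using pgf_branching_kernel[OF K x] x by (simp add: pgf_nonneg)
next
  case infinity
  then show ?thesis
    using K by (simp add: branching_kernel_def pgf_def)
qed

lemma pgf_bind_branching_kernel:
  assumes K: "branching_kernel K" and x: "0 \<le> x" "x \<le> 1"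
  shows "pgf (bind_pmf p K) x = pgf p (pgf (K 1) x)"
proof -
  have "ennreal (pgf (bind_pmf p K) x) = ennreal (pgf p (pgf (K 1) x))"
    using x pgf_nonneg[OF x] pgf_le_1[OF x]
    by (simp add: ennreal_pgf_bind_pmf ennreal_pgf_branching_kernel[OF K] nn_integral_power_enat)
  then show ?thesis
    using x pgf_nonneg[OF x] pgf_le_1[OF x] by (simp add: pgf_nonneg)
qed

lemma branching_kernel_eqI:
  assumes K: "branching_kernel K" and K': "branching_kernel K'" and "K 1 = K' 1"
  shows "K = K'"
proof
  fix y
  show "K y = K' y"
  proof (cases y)
    case (enat m)
    have "pgf (K (enat m)) x = pgf (K' (enat m)) x" if "0 < x" "x < 1" for x
      using that assms by (simp add: pgf_branching_kernel)
    then show ?thesis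
      using enat by (simp add: pmf_enat_eqI)
  next
    case infinity
    then show ?thesis
      using K K' by (simp add: branching_kernel_def)
  qed
qed

lemma branching_kernel_return_pmf: "branching_kernel return_pmf"
  by (simp add: branching_kernel_def conv_pmf_def)

lemma branching_kernel_bind_pmf:
  assumes K: "branching_kernel K" and K': "branching_kernel K'"
  shows "branching_kernel (\<lambda>y. bind_pmf (K y) K')"
  unfolding branching_kernel_def
proof (intro conjI allI)
  show "bind_pmf (K 0) K' = return_pmf 0" "bind_pmf (K \<infinity>) K' = return_pmf \<infinity>"
    using K K' by (simp_all add: branching_kernel_def bind_return_pmf)
  fix m n
  show "conv_pmf (bind_pmf (K (enat m)) K') (bind_pmf (K (enat n)) K') = bind_pmf (K (enat (m + n))) K'"
  proof (rule pmf_enat_eqI)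
    fix x :: real assume "0 < x" "x < 1"
    then have x: "0 \<le> x" "x \<le> 1" and y: "0 \<le> pgf (K' 1) x" "pgf (K' 1) x \<le> 1"
      by (auto intro: pgf_nonneg pgf_le_1)
    show "pgf (conv_pmf (bind_pmf (K (enat m)) K') (bind_pmf (K (enat n)) K')) x =
        pgf (bind_pmf (K (enat (m + n))) K') x"
      using x y by (simp add: pgf_conv_pmf pgf_bind_branching_kernel[OF K'] pgf_branching_kernel[OF K]
          power_add)
  qed
qed

primrec conv_power :: "enat pmf \<Rightarrow> nat \<Rightarrow> enat pmf" where
  "conv_power p 0 = return_pmf 0"
| "conv_power p (Suc m) = conv_pmf p (conv_power p m)"

lemma pgf_conv_power: "0 \<le> x \<Longrightarrow> x \<le> 1 \<Longrightarrow> pgf (conv_power p m) x = pgf p x ^ m"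
  by (induction m) (simp_all add: pgf_conv_pmf pgf_return_pmf_zero)

definition branching_kernel_of :: "enat pmf \<Rightarrow> enat \<Rightarrow> enat pmf" where
  "branching_kernel_of p y = (case y of enat m \<Rightarrow> conv_power p m | \<infinity> \<Rightarrow> return_pmf \<infinity>)"

lemma branching_kernel_of_one: "branching_kernel_of p 1 = p"
  by (rule pmf_enat_eqI) (simp add: branching_kernel_of_def one_enat_def pgf_conv_pmf pgf_return_pmf_zero less_imp_le)

lemma branching_kernel_branching_kernel_of: "branching_kernel (branching_kernel_of p)"
  unfolding branching_kernel_def
proof (intro conjI allI)
  fix m n
  show "conv_pmf (branching_kernel_of p (enat m)) (branching_kernel_of p (enat n)) =
      branching_kernel_of p (enat (m + n))"
    by (rule pmf_enat_eqI)
       (simp add: branching_kernel_of_def pgf_conv_pmf pgf_conv_power power_add less_imp_le)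
qed (simp_all add: branching_kernel_of_def zero_enat_def)

section \<open>Generating functions on the unit disc\<close>

lemma compact_subset_ball_imp_cball:
  fixes K :: "'a::real_normed_vector set"
  assumes "compact K" "K \<subseteq> ball 0 r" "0 < r"
  obtains \<rho> where "0 \<le> \<rho>" "\<rho> < r" "K \<subseteq> cball 0 \<rho>"
proof (cases "K = {}")
  case True
  then show ?thesis
    using that[of 0] assms(3) by auto
next
  case False
  obtain x where x: "x \<in> K" "\<forall>y\<in>K. norm y \<le> norm x"
    using continuous_attains_sup[OF assms(1) False continuous_on_norm_id] by blast
  then show ?thesis
    using assms(2) by (intro that[of "norm x"]) auto
qed

lemma islimpt_of_real_image:
  assumes "x islimpt S"
  shows "(of_real x :: 'a::real_normed_div_algebra) islimpt (of_real ` S)"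
  unfolding islimpt_approachable
proof (intro allI impI)
  fix e :: real assume "0 < e"
  then obtain y where "y \<in> S" "y \<noteq> x" "dist y x < e"
    using assms by (auto simp: islimpt_approachable)
  then show "\<exists>y'\<in>of_real ` S. y' \<noteq> of_real x \<and> dist y' (of_real x :: 'a) < e"
    by (intro bexI[of _ "of_real y"]) auto
qed

definition gf :: "(nat \<Rightarrow> real) \<Rightarrow> complex \<Rightarrow> complex" where
  "gf c z = (\<Sum>n. complex_of_real (c n) * z ^ n)"

lemma gen_fun_eq_gf: "gen_fun L s t = gf (\<lambda>n. pmf (L s t 1) (enat n))"
  by (simp add: fun_eq_iff gen_fun_def gf_def)

lemma gf_eq_scaleR: "gf c z = (\<Sum>n. c n *\<^sub>R z ^ n)"
  by (simp add: gf_def scaleR_conv_of_real)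

lemma holomorphic_gf:
  assumes c: "subprob_seq c"
  shows "gf c holomorphic_on ball 0 1"
proof (rule power_series_holomorphic)
  fix z :: complex assume "z \<in> ball 0 1"
  then have "summable (\<lambda>n. c n *\<^sub>R z ^ n)"
    by (intro summable_subprob_seq_scaleR[OF c, of _ 1]) (simp add: norm_power power_le_one)
  then show "(\<lambda>n. complex_of_real (c n) * (z - 0) ^ n) sums gf c z"
    by (simp add: gf_def scaleR_conv_of_real summable_sums)
qed

lemma gf_of_real:
  assumes c: "subprob_seq c" and x: "\<bar>x\<bar> \<le> 1"
  shows "gf c (complex_of_real x) = complex_of_real (\<Sum>n. c n * x ^ n)"
proof -
  have "summable (\<lambda>n. c n * x ^ n)"
    using summable_subprob_seq_scaleR[OF c, of "\<lambda>n. x ^ n" 1] x by (simp add: power_abs power_le_one)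
  then have "(\<lambda>n. complex_of_real (c n * x ^ n)) sums complex_of_real (\<Sum>n. c n * x ^ n)"
    by (simp only: sums_of_real_iff summable_sums)
  then show ?thesis
    by (simp add: gf_def sums_iff)
qed

lemma gf_pmf_of_real:
  "\<bar>x\<bar> \<le> 1 \<Longrightarrow> gf (\<lambda>n. pmf p (enat n)) (complex_of_real x) = complex_of_real (pgf p x)"
  unfolding pgf_def by (rule gf_of_real[OF subprob_seq_pmf_enat])

lemma norm_gf_less_1:
  assumes c: "subprob_seq c" and "c 0 < 1" "norm z < 1"
  shows "norm (gf c z) < 1"
proof -
  have "summable (\<lambda>n. norm (c n *\<^sub>R z ^ n))"
    using assms by (intro summable_norm_subprob_seq_scaleR[OF c, of _ 1]) (simp add: norm_power power_le_one)
  then have "norm (gf c z) \<le> (\<Sum>n. norm (c n *\<^sub>R z ^ n))"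
    unfolding gf_eq_scaleR by (rule summable_norm)
  also have "\<dots> = (\<Sum>n. c n * norm z ^ n)"
    using subprob_seqD(1)[OF c] by (simp add: norm_power)
  also have "\<dots> < 1"
    using assms by (intro suminf_subprob_seq_power_less_1) auto
  finally show ?thesis .
qed

lemma uniform_limit_gf:
  assumes c: "\<And>a. subprob_seq (c a)" and d: "subprob_seq d"
    and lim: "\<And>n. ((\<lambda>a. c a n) \<longlongrightarrow> d n) F"
    and K: "compact K" "K \<subseteq> ball 0 1"
  shows "uniform_limit K (\<lambda>a. gf (c a)) (gf d) F"
proof -
  obtain \<rho> where \<rho>: "0 \<le> \<rho>" "\<rho> < 1" "K \<subseteq> cball 0 \<rho>"
    using compact_subset_ball_imp_cball[OF K] by auto
  have "norm (z ^ n) \<le> \<rho> ^ n" if "z \<in> K" for z n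
  proof -
    have "norm z \<le> \<rho>"
      using \<rho>(3) that by auto
    then show ?thesis
      by (simp add: norm_power power_mono)
  qed
  moreover have "(\<lambda>n. \<rho> ^ n) \<longlonglongrightarrow> 0"
    using \<rho> by (intro LIMSEQ_power_zero) simp
  ultimately show ?thesis
    unfolding gf_eq_scaleR[abs_def] by (rule uniform_limit_subprob_series[OF c d lim])
qed

section \<open>From branching kernels to evolution families\<close>

lemma Delta_iff [simp]: "(s, t) \<in> Delta \<longleftrightarrow> 0 \<le> s \<and> s \<le> t"
  by (simp add: Delta_def)

lemma branching_kernels_refl: "branching_kernels L \<Longrightarrow> 0 \<le> s \<Longrightarrow> L s s y = return_pmf y"
  by (simp add: branching_kernels_def)

lemma branching_kernels_trans:
  assumes "branching_kernels L" "0 \<le> s" "s \<le> t" "t \<le> u"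
  shows "L s u y = bind_pmf (L s t y) (L t u)"
proof -
  have "kernel_comp (L s t) (L t u) = L s u"
    using assms unfolding branching_kernels_def by blast
  then show ?thesis
    by (simp add: kernel_comp_def fun_eq_iff)
qed

lemma branching_kernels_continuous:
  fixes f :: "enat \<Rightarrow> real"
  shows "branching_kernels L \<Longrightarrow> continuous_on UNIV f \<Longrightarrow>
    continuous_on Delta (\<lambda>(s, t). measure_pmf.expectation (L s t (enat n)) f)"
  unfolding branching_kernels_def by blast

lemma branching_kernels_branching_kernel:
  "branching_kernels L \<Longrightarrow> 0 \<le> s \<Longrightarrow> s \<le> t \<Longrightarrow> branching_kernel (L s t)"
  unfolding branching_kernels_def branching_kernel_def by (auto dest!: bspec[where x="(s, t)"])

lemma branching_kernelsI:
  assumes "\<And>s y. 0 \<le> s \<Longrightarrow> L s s y = return_pmf y"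
    and "\<And>s t u. 0 \<le> s \<Longrightarrow> s \<le> t \<Longrightarrow> t \<le> u \<Longrightarrow> kernel_comp (L s t) (L t u) = L s u"
    and "\<And>n (f :: enat \<Rightarrow> real). continuous_on UNIV f \<Longrightarrow>
      continuous_on Delta (\<lambda>(s, t). measure_pmf.expectation (L s t (enat n)) f)"
    and "\<And>s t. 0 \<le> s \<Longrightarrow> s \<le> t \<Longrightarrow> branching_kernel (L s t)"
  shows "branching_kernels L"
  using assms unfolding branching_kernels_def branching_kernel_def by auto

lemma pgf_branching_kernels_trans:
  assumes L: "branching_kernels L" and "0 \<le> s" "s \<le> t" "t \<le> u" and x: "0 \<le> x" "x \<le> 1"
  shows "pgf (L s u 1) x = pgf (L s t 1) (pgf (L t u 1) x)"
  using assms
  by (simp add: branching_kernels_trans[OF L, of s t u] pgf_bind_branching_kernel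
      branching_kernels_branching_kernel)

lemma continuous_on_pmf_branching_kernels:
  assumes L: "branching_kernels L"
  shows "continuous_on Delta (\<lambda>(s, t). pmf (L s t 1) (enat n))"
  using branching_kernels_continuous[OF L continuous_on_indicator_enat, of 1 n]
  by (simp add: measure_pmf_single one_enat_def)

lemma less_1_on_Delta_by_bisection:
  fixes q :: "real \<times> real \<Rightarrow> real"
  assumes cont: "continuous_on Delta q"
    and le_1: "\<And>s t. 0 \<le> s \<Longrightarrow> s \<le> t \<Longrightarrow> q (s, t) \<le> 1"
    and diag: "\<And>s. 0 \<le> s \<Longrightarrow> q (s, s) < 1"
    and bisect: "\<And>s t u. 0 \<le> s \<Longrightarrow> s < t \<Longrightarrow> t < u \<Longrightarrow> q (s, u) = 1 \<Longrightarrow> q (t, u) < 1 \<Longrightarrow> q (s, t) = 1"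
    and st: "0 \<le> s" "s \<le> t"
  shows "q (s, t) < 1"
proof (rule ccontr)
  define S where "S = {(a, b). s \<le> a \<and> a \<le> b \<and> b \<le> t}"
  define C where "C = S \<inter> q -` {1}"
  assume "\<not> q (s, t) < 1"
  then have "(s, t) \<in> C"
    using le_1[OF st] by (simp add: C_def S_def st)
  have "compact C"
  proof -
    have "continuous_on S q"
      using cont by (rule continuous_on_subset) (use st in \<open>auto simp: S_def\<close>)
    moreover have "closed S"
      unfolding S_def case_prod_unfold by (intro closed_Collect_conj closed_Collect_le continuous_intros)
    ultimately have "closed C"
      unfolding C_def by (rule continuous_closed_preimage) simp
    moreover have "bounded C"
      by (rule bounded_subset[OF bounded_cbox[of "(s, s)" "(t, t)"]]) (auto simp: C_def S_def cbox_Pair_eq)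
    ultimately show ?thesis
      by (simp add: compact_eq_bounded_closed)
  qed
  then obtain a where "a \<in> C" and a_min: "\<And>c. c \<in> C \<Longrightarrow> snd a - fst a \<le> snd c - fst c"
  proof -
    have "continuous_on C (\<lambda>c. snd c - fst c)"
      by (intro continuous_intros)
    then show ?thesis
      using continuous_attains_inf[OF \<open>compact C\<close>] \<open>(s, t) \<in> C\<close> that by blast
  qed
  then obtain s1 t1 where a: "a = (s1, t1)" and s1: "s \<le> s1" "s1 \<le> t1" "t1 \<le> t" and q1: "q (s1, t1) = 1"
    by (auto simp: C_def S_def)
  have "s1 \<noteq> t1"
    using q1 diag[of s1] st s1 by auto
  define r where "r = (s1 + t1) / 2"
  have r: "s1 < r" "r < t1"
    using s1 \<open>s1 \<noteq> t1\<close> by (auto simp: r_def)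
  have "q (r, t1) \<noteq> 1"
    using a_min[of "(r, t1)"] r s1 by (auto simp: a C_def S_def)
  then have "q (r, t1) < 1"
    using le_1[of r t1] r s1 st by linarith
  then have "q (s1, r) = 1"
    using bisect[of s1 r t1] q1 r s1 st by linarith
  then show False
    using a_min[of "(s1, r)"] r s1 by (auto simp: a C_def S_def)
qed

lemma pmf_zero_branching_kernels_less_1:
  assumes L: "branching_kernels L" and st: "0 \<le> s" "s \<le> t"
  shows "pmf (L s t 1) 0 < 1"
proof -
  define q where "q = (\<lambda>(s, t). pmf (L s t 1) 0)"
  have cont: "continuous_on Delta q"
    using continuous_on_pmf_branching_kernels[OF L, of 0] by (simp add: q_def zero_enat_def)
  have le_1: "q (s, t) \<le> 1" for s t
    by (simp add: q_def pmf_le_1)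
  have diag: "q (s, s) < 1" if "0 \<le> s" for s
    using that by (simp add: q_def branching_kernels_refl[OF L])
  have bisect: "q (s, t) = 1"
    if "0 \<le> s" "s < t" "t < u" "q (s, u) = 1" "q (t, u) < 1" for s t u
  proof -
    have "pgf (L s t 1) (q (t, u)) = 1"
      using pgf_branching_kernels_trans[OF L, of s t u 0] that by (simp add: q_def pgf_zero)
    then have "\<not> q (s, t) < 1"
      using pgf_less_1[of "L s t 1" "q (t, u)"] that(5) by (auto simp: q_def)
    then show ?thesis
      using le_1[of s t] by linarith
  qed
  show ?thesis
    using less_1_on_Delta_by_bisection[OF cont le_1 diag bisect st] by (simp add: q_def)
qed

lemma holomorphic_gen_fun: "gen_fun L s t holomorphic_on ball 0 1"
  by (simp add: gen_fun_eq_gf holomorphic_gf subprob_seq_pmf_enat)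

lemma gen_fun_of_real: "\<bar>x\<bar> \<le> 1 \<Longrightarrow> gen_fun L s t (of_real x) = of_real (pgf (L s t 1) x)"
  by (simp add: gen_fun_eq_gf gf_pmf_of_real)

lemma gen_fun_in_unit_disc:
  assumes L: "branching_kernels L" and "0 \<le> s" "s \<le> t" and "z \<in> ball 0 1"
  shows "gen_fun L s t z \<in> ball 0 1"
  using norm_gf_less_1[OF subprob_seq_pmf_enat] pmf_zero_branching_kernels_less_1[OF L] assms
  by (simp add: gen_fun_eq_gf zero_enat_def)

lemma gen_fun_refl:
  assumes L: "branching_kernels L" and "0 \<le> s"
  shows "gen_fun L s s z = z"
proof -
  have "(\<lambda>n. complex_of_real (pmf (L s s 1) (enat n)) * z ^ n) = (\<lambda>n. if n = 1 then z ^ n else 0)"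
    using branching_kernels_refl[OF L assms(2)] by (auto simp: fun_eq_iff one_enat_def)
  then show ?thesis
    using sums_single[of 1 "\<lambda>n. z ^ n"] by (simp add: gen_fun_def sums_iff)
qed

lemma gen_fun_trans:
  assumes L: "branching_kernels L" and st: "0 \<le> s" "s \<le> t" "t \<le> u" and z: "z \<in> ball 0 1"
  shows "gen_fun L s u z = gen_fun L s t (gen_fun L t u z)"
proof -
  define h where "h w = gen_fun L s u w - gen_fun L s t (gen_fun L t u w)" for w
  have "(gen_fun L s t \<circ> gen_fun L t u) holomorphic_on ball 0 1"
    using st gen_fun_in_unit_disc[OF L, of t u]
    by (intro holomorphic_on_compose_gen[OF holomorphic_gen_fun holomorphic_gen_fun]) auto
  then have holo: "h holomorphic_on ball 0 1"
    unfolding h_def by (intro holomorphic_intros holomorphic_gen_fun) (simp add: o_def)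
  have zero: "h w = 0" if w: "w \<in> of_real ` {0..<1}" for w
  proof -
    obtain x where x: "w = of_real x" "0 \<le> x" "x < 1"
      using w by auto
    define y where "y = pgf (L t u 1) x"
    have y: "0 \<le> y" "y \<le> 1"
      using x by (auto simp: y_def intro: pgf_nonneg pgf_le_1)
    have "gen_fun L s t (gen_fun L t u w) = of_real (pgf (L s t 1) y)"
      using x y by (simp add: gen_fun_of_real y_def)
    also have "pgf (L s t 1) y = pgf (L s u 1) x"
      using x st by (simp add: pgf_branching_kernels_trans[OF L] y_def)
    finally show ?thesis
      using x by (simp add: h_def gen_fun_of_real)
  qed
  have limpt: "(0::complex) islimpt of_real ` {0..<1}"
    using islimpt_of_real_image[of 0 "{0..<1::real}"] by simp
  have "of_real ` {0..<1} \<subseteq> ball (0::complex) 1"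
    by auto
  then have "h z = 0"
    by (rule analytic_continuation[OF holo open_ball connected_ball _ _ limpt zero z]) simp
  then show ?thesis
    by (simp add: h_def)
qed

lemma uniform_limit_gen_fun:
  assumes L: "branching_kernels L" and st0: "st0 \<in> Delta" and K: "compact K" "K \<subseteq> ball 0 1"
  shows "uniform_limit K (\<lambda>(s, t). gen_fun L s t) (gen_fun L (fst st0) (snd st0)) (at st0 within Delta)"
proof -
  define c where "c st = (\<lambda>n. pmf (L (fst st) (snd st) 1) (enat n))" for st
  have "((\<lambda>st. c st n) \<longlongrightarrow> c st0 n) (at st0 within Delta)" for n
    using continuous_on_pmf_branching_kernels[OF L, of n] st0
    by (simp add: continuous_on_def c_def case_prod_beta')
  then have "uniform_limit K (\<lambda>st. gf (c st)) (gf (c st0)) (at st0 within Delta)"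
    by (intro uniform_limit_gf K) (simp_all add: c_def subprob_seq_pmf_enat)
  then show ?thesis
    by (simp add: gen_fun_eq_gf c_def case_prod_beta')
qed

lemma in_PGF_gen_fun:
  assumes L: "branching_kernels L" and "0 \<le> s" "s \<le> t"
  shows "in_PGF (gen_fun L s t)"
  unfolding in_PGF_def
proof
  show "\<exists>p. (\<forall>n. 0 \<le> p n) \<and> summable p \<and> suminf p \<le> 1 \<and>
      (\<forall>z\<in>unit_disc. gen_fun L s t z = (\<Sum>n. complex_of_real (p n) * z ^ n))"
    using subprob_seq_pmf_enat[of "L s t 1"]
    by (intro exI[of _ "\<lambda>n. pmf (L s t 1) (enat n)"]) (auto simp: subprob_seq_def gen_fun_def)
  have "gen_fun L s t 0 \<in> ball 0 1"
    using gen_fun_in_unit_disc[OF L] assms by simp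
  then show "\<not> (\<forall>z\<in>unit_disc. gen_fun L s t z = 1)"
    by force
qed

theorem top_rev_evol_family_gen_fun:
  assumes L: "branching_kernels L"
  shows "top_rev_evol_family (gen_fun L)"
  unfolding top_rev_evol_family_def
proof (intro conjI ballI allI impI)
  show "case st of (s, t) \<Rightarrow> gen_fun L s t holomorphic_on unit_disc \<and> gen_fun L s t ` unit_disc \<subseteq> unit_disc"
    if "st \<in> Delta" for st
    using that gen_fun_in_unit_disc[OF L] by (auto simp: holomorphic_gen_fun)
next
  show "gen_fun L s s z = z" if "0 \<le> s \<and> z \<in> unit_disc" for s z
    using that by (simp add: gen_fun_refl[OF L])
next
  show "gen_fun L s u z = gen_fun L s t (gen_fun L t u z)"
    if "0 \<le> s \<and> s \<le> t \<and> t \<le> u \<and> z \<in> unit_disc" for s t u z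
    using that by (intro gen_fun_trans[OF L]) auto
next
  show "uniform_limit K (\<lambda>(s, t). gen_fun L s t) (gen_fun L (fst st0) (snd st0)) (at st0 within Delta)"
    if "st0 \<in> Delta" "compact K \<and> K \<subseteq> unit_disc" for st0 K
    using that by (intro uniform_limit_gen_fun[OF L]) auto
qed

section \<open>From evolution families to branching kernels\<close>

lemma top_rev_evol_family_in_unit_disc:
  assumes "top_rev_evol_family F" "0 \<le> s" "s \<le> t" "z \<in> ball 0 1"
  shows "F s t z \<in> ball 0 1"
proof -
  have "\<forall>(s, t)\<in>Delta. F s t holomorphic_on unit_disc \<and> F s t ` unit_disc \<subseteq> unit_disc"
    using assms(1) unfolding top_rev_evol_family_def by (elim conjE) assumption
  from bspec[OF this, of "(s, t)"] have "F s t ` ball 0 1 \<subseteq> ball 0 1"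
    using assms(2,3) by simp
  then show ?thesis
    using assms(4) by blast
qed

lemma top_rev_evol_family_refl:
  assumes "top_rev_evol_family F" "0 \<le> s" "z \<in> ball 0 1"
  shows "F s s z = z"
proof -
  have "\<forall>s z. 0 \<le> s \<and> z \<in> unit_disc \<longrightarrow> F s s z = z"
    using assms(1) unfolding top_rev_evol_family_def by (elim conjE) assumption
  then show ?thesis
    using assms(2,3) by blast
qed

lemma top_rev_evol_family_trans:
  assumes "top_rev_evol_family F" "0 \<le> s" "s \<le> t" "t \<le> u" "z \<in> ball 0 1"
  shows "F s u z = F s t (F t u z)"
proof -
  have "\<forall>s t u z. 0 \<le> s \<and> s \<le> t \<and> t \<le> u \<and> z \<in> unit_disc \<longrightarrow> F s u z = F s t (F t u z)"
    using assms(1) unfolding top_rev_evol_family_def by (elim conjE) assumption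
  then show ?thesis
    using assms(2-5) by blast
qed

lemma top_rev_evol_family_tendsto:
  assumes "top_rev_evol_family F" "st0 \<in> Delta" "z \<in> ball 0 1"
  shows "((\<lambda>st. F (fst st) (snd st) z) \<longlongrightarrow> F (fst st0) (snd st0) z) (at st0 within Delta)"
proof -
  have "\<forall>st0\<in>Delta. \<forall>K. compact K \<and> K \<subseteq> unit_disc \<longrightarrow>
      uniform_limit K (\<lambda>(s, t). F s t) (F (fst st0) (snd st0)) (at st0 within Delta)"
    using assms(1) unfolding top_rev_evol_family_def by (elim conjE) assumption
  then have "uniform_limit {z} (\<lambda>(s, t). F s t) (F (fst st0) (snd st0)) (at st0 within Delta)"
    using assms(2,3) by (simp only: compact_sing insert_subset empty_subsetI simp_thms)
  then show ?thesis
    by (simp add: split_beta)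
qed

context
  fixes F :: "real \<Rightarrow> real \<Rightarrow> complex \<Rightarrow> complex"
  assumes F: "top_rev_evol_family F" and F_PGF: "\<forall>(s, t)\<in>Delta. in_PGF (F s t)"
begin

definition offspring_seq :: "real \<Rightarrow> real \<Rightarrow> nat \<Rightarrow> real" where
  "offspring_seq s t = (SOME c. subprob_seq c \<and> (\<forall>z\<in>ball 0 1. F s t z = gf c z))"

lemma
  assumes "0 \<le> s" "s \<le> t"
  shows subprob_seq_offspring_seq: "subprob_seq (offspring_seq s t)"
    and F_eq_gf_offspring_seq: "z \<in> ball 0 1 \<Longrightarrow> F s t z = gf (offspring_seq s t) z"
proof -
  from bspec[OF F_PGF, of "(s, t)"] have "in_PGF (F s t)"
    using assms by simp
  then have "\<exists>c. subprob_seq c \<and> (\<forall>z\<in>ball 0 1. F s t z = gf c z)"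
    unfolding in_PGF_def subprob_seq_def gf_def by blast
  then have "subprob_seq (offspring_seq s t) \<and> (\<forall>z\<in>ball 0 1. F s t z = gf (offspring_seq s t) z)"
    unfolding offspring_seq_def by (rule someI_ex)
  then show "subprob_seq (offspring_seq s t)" "z \<in> ball 0 1 \<Longrightarrow> F s t z = gf (offspring_seq s t) z"
    by auto
qed

definition offspring :: "real \<Rightarrow> real \<Rightarrow> enat pmf" where
  "offspring s t = pmf_of_subprob_seq (offspring_seq s t)"

lemma F_of_real_eq_pgf_offspring:
  assumes "0 \<le> s" "s \<le> t" "0 \<le> x" "x < 1"
  shows "F s t (of_real x) = of_real (pgf (offspring s t) x)"
  using assms
  by (simp add: F_eq_gf_offspring_seq gf_of_real subprob_seq_offspring_seq offspring_def
      pgf_pmf_of_subprob_seq)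

lemma pgf_offspring_less_1:
  assumes "0 \<le> s" "s \<le> t" "0 \<le> x" "x < 1"
  shows "pgf (offspring s t) x < 1"
  using top_rev_evol_family_in_unit_disc[OF F assms(1,2), of "of_real x"] assms
  by (simp add: F_of_real_eq_pgf_offspring)

lemma pgf_offspring_refl:
  assumes "0 \<le> s" "0 \<le> x" "x < 1"
  shows "pgf (offspring s s) x = x"
  using F_of_real_eq_pgf_offspring[of s s x] top_rev_evol_family_refl[OF F, of s "of_real x"] assms by simp

lemma pgf_offspring_trans:
  assumes st: "0 \<le> s" "s \<le> t" "t \<le> u" and x: "0 \<le> x" "x < 1"
  shows "pgf (offspring s u) x = pgf (offspring s t) (pgf (offspring t u) x)"
proof -
  define y where "y = pgf (offspring t u) x"
  have y: "0 \<le> y" "y < 1"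
    using x st pgf_offspring_less_1[of t u x] by (auto simp: y_def pgf_nonneg)
  have "of_real (pgf (offspring s u) x) = F s u (of_real x)"
    using st x by (simp add: F_of_real_eq_pgf_offspring)
  also have "\<dots> = F s t (F t u (of_real x))"
    using st x by (intro top_rev_evol_family_trans[OF F]) auto
  also have "\<dots> = of_real (pgf (offspring s t) y)"
    using st x y by (simp add: F_of_real_eq_pgf_offspring y_def)
  finally show ?thesis
    by (simp add: y_def)
qed

lemma tendsto_pgf_offspring:
  assumes st0: "st0 \<in> Delta" and x: "0 \<le> x" "x < 1"
  shows "((\<lambda>st. pgf (offspring (fst st) (snd st)) x) \<longlongrightarrow> pgf (offspring (fst st0) (snd st0)) x)
    (at st0 within Delta)"
proof -
  have F_pgf: "F (fst st) (snd st) (of_real x) = of_real (pgf (offspring (fst st) (snd st)) x)"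
    if "st \<in> Delta" for st
    using that x by (cases st) (simp add: F_of_real_eq_pgf_offspring)
  have "((\<lambda>st. F (fst st) (snd st) (of_real x)) \<longlongrightarrow> F (fst st0) (snd st0) (of_real x)) (at st0 within Delta)"
    using x by (intro top_rev_evol_family_tendsto[OF F st0]) auto
  moreover have "\<forall>\<^sub>F st in at st0 within Delta.
      F (fst st) (snd st) (of_real x) = of_real (pgf (offspring (fst st) (snd st)) x)"
    using F_pgf by (auto simp: eventually_at_filter)
  ultimately have "((\<lambda>st. of_real (pgf (offspring (fst st) (snd st)) x)) \<longlongrightarrow>
      F (fst st0) (snd st0) (of_real x)) (at st0 within Delta)"
    by (rule Lim_transform_eventually)
  then show ?thesis
    by (simp add: F_pgf[OF st0] tendsto_of_real_iff)
qed

definition kernel_family :: "real \<Rightarrow> real \<Rightarrow> enat \<Rightarrow> enat pmf" where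
  "kernel_family s t = branching_kernel_of (offspring s t)"

lemma kernel_family_refl:
  assumes "0 \<le> s"
  shows "kernel_family s s = return_pmf"
  unfolding kernel_family_def
proof (rule branching_kernel_eqI[OF branching_kernel_branching_kernel_of branching_kernel_return_pmf])
  have "pgf (offspring s s) x = pgf (return_pmf 1) x" if "0 < x" "x < 1" for x
    using that assms by (simp add: pgf_offspring_refl pgf_return_pmf[of x 1, unfolded one_enat_def[symmetric]])
  then show "branching_kernel_of (offspring s s) 1 = return_pmf 1"
    by (simp add: branching_kernel_of_one pmf_enat_eqI)
qed

lemma kernel_family_trans:
  assumes st: "0 \<le> s" "s \<le> t" "t \<le> u"
  shows "kernel_comp (kernel_family s t) (kernel_family t u) = kernel_family s u"
  unfolding kernel_comp_def kernel_family_def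
proof (rule branching_kernel_eqI[OF branching_kernel_bind_pmf[OF branching_kernel_branching_kernel_of
      branching_kernel_branching_kernel_of] branching_kernel_branching_kernel_of])
  have "pgf (bind_pmf (offspring s t) (branching_kernel_of (offspring t u))) x = pgf (offspring s u) x"
    if "0 < x" "x < 1" for x
    using that st
    by (simp add: pgf_bind_branching_kernel branching_kernel_branching_kernel_of
        branching_kernel_of_one pgf_offspring_trans[of s t u x])
  then show "bind_pmf (branching_kernel_of (offspring s t) 1) (branching_kernel_of (offspring t u)) =
      branching_kernel_of (offspring s u) 1"
    by (simp add: branching_kernel_of_one pmf_enat_eqI)
qed

lemma continuous_on_expectation_kernel_family:
  fixes f :: "enat \<Rightarrow> real"
  assumes f: "continuous_on UNIV f"
  shows "continuous_on Delta (\<lambda>(s, t). measure_pmf.expectation (kernel_family s t (enat n)) f)"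
  unfolding continuous_on_def split_beta
proof
  fix st0 assume st0: "st0 \<in> Delta"
  define q where "q st = kernel_family (fst st) (snd st) (enat n)" for st
  have pgf_q: "pgf (q st) x = pgf (offspring (fst st) (snd st)) x ^ n" if "0 \<le> x" "x \<le> 1" for st x
    using that by (simp add: q_def kernel_family_def pgf_branching_kernel branching_kernel_branching_kernel_of
        branching_kernel_of_one)
  have "((\<lambda>st. pgf (q st) x) \<longlongrightarrow> pgf (q st0) x) (at st0 within Delta)" if "0 < x" "x < 1" for x
    using that by (simp add: pgf_q tendsto_power tendsto_pgf_offspring[OF st0])
  then have "((\<lambda>st. pmf (q st) (enat j)) \<longlongrightarrow> pmf (q st0) (enat j)) (at st0 within Delta)" for j
    by (intro tendsto_coeff_of_tendsto_power_series[OF subprob_seq_pmf_enat subprob_seq_pmf_enat])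
       (simp add: pgf_def)
  then show "((\<lambda>st. measure_pmf.expectation (q st) f) \<longlongrightarrow> measure_pmf.expectation (q st0) f)
      (at st0 within Delta)"
    by (rule tendsto_expectation_pmf_enat[OF f])
qed

lemma branching_kernels_kernel_family: "branching_kernels kernel_family"
proof (rule branching_kernelsI)
  show "branching_kernel (kernel_family s t)" for s t
    by (simp add: kernel_family_def branching_kernel_branching_kernel_of)
qed (simp_all add: kernel_family_refl kernel_family_trans continuous_on_expectation_kernel_family)

lemma gen_fun_kernel_family:
  assumes "0 \<le> s" "s \<le> t" "z \<in> ball 0 1"
  shows "F s t z = gen_fun kernel_family s t z"
  using assms
  by (simp add: gen_fun_eq_gf kernel_family_def branching_kernel_of_one offspring_def
      pmf_pmf_of_subprob_seq subprob_seq_offspring_seq F_eq_gf_offspring_seq)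

lemma kernel_family_unique:
  assumes L: "branching_kernels L" and F_L: "\<And>z. z \<in> ball 0 1 \<Longrightarrow> F s t z = gen_fun L s t z"
    and st: "0 \<le> s" "s \<le> t"
  shows "L s t = kernel_family s t"
  unfolding kernel_family_def
proof (rule branching_kernel_eqI[OF branching_kernels_branching_kernel[OF L st]
      branching_kernel_branching_kernel_of])
  have "pgf (L s t 1) x = pgf (offspring s t) x" if "0 < x" "x < 1" for x
  proof -
    have "of_real (pgf (L s t 1) x) = F s t (of_real x)"
      using that by (simp add: F_L gen_fun_of_real)
    also have "\<dots> = of_real (pgf (offspring s t) x)"
      using that st by (simp add: F_of_real_eq_pgf_offspring)
    finally show ?thesis
      by simp
  qed
  then show "L s t 1 = branching_kernel_of (offspring s t) 1"
    by (simp add: branching_kernel_of_one pmf_enat_eqI)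
qed

theorem branching_kernels_of_top_rev_evol_family:
  "\<exists>L. branching_kernels L \<and> (\<forall>(s, t)\<in>Delta. \<forall>z\<in>unit_disc. F s t z = gen_fun L s t z) \<and>
      (\<forall>L'. branching_kernels L' \<and> (\<forall>(s, t)\<in>Delta. \<forall>z\<in>unit_disc. F s t z = gen_fun L' s t z) \<longrightarrow>
        (\<forall>(s, t)\<in>Delta. L' s t = L s t))"
proof (intro exI[of _ kernel_family] conjI allI impI ballI)
  show "branching_kernels kernel_family"
    by (rule branching_kernels_kernel_family)
  show "case st of (s, t) \<Rightarrow> \<forall>z\<in>unit_disc. F s t z = gen_fun kernel_family s t z"
    if "st \<in> Delta" for st
    using that gen_fun_kernel_family by (cases st) auto
  fix L' st
  assume L': "branching_kernels L' \<and> (\<forall>(s, t)\<in>Delta. \<forall>z\<in>unit_disc. F s t z = gen_fun L' s t z)"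
    and st: "st \<in> Delta"
  obtain s t where st_eq: "st = (s, t)"
    by fastforce
  have "\<forall>(s, t)\<in>Delta. \<forall>z\<in>unit_disc. F s t z = gen_fun L' s t z"
    using L' by blast
  from bspec[OF this st] have "\<forall>z\<in>unit_disc. F s t z = gen_fun L' s t z"
    by (simp add: st_eq)
  then show "case st of (s, t) \<Rightarrow> L' s t = kernel_family s t"
    using kernel_family_unique[of L' s t] L' st by (simp add: st_eq)
qed

end

theorem mainTheorem16:
  shows "(\<forall>L. branching_kernels L \<longrightarrow>
            top_rev_evol_family (gen_fun L) \<and> (\<forall>(s, t)\<in>Delta. in_PGF (gen_fun L s t))) \<and>
         (\<forall>F. top_rev_evol_family F \<and> (\<forall>(s, t)\<in>Delta. in_PGF (F s t)) \<longrightarrow>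
            (\<exists>L. branching_kernels L \<and>
                 (\<forall>(s, t)\<in>Delta. \<forall>z\<in>unit_disc. F s t z = gen_fun L s t z) \<and>
                 (\<forall>L'. branching_kernels L' \<and>
                        (\<forall>(s, t)\<in>Delta. \<forall>z\<in>unit_disc. F s t z = gen_fun L' s t z) \<longrightarrow>
                        (\<forall>(s, t)\<in>Delta. L' s t = L s t))))"
  by (intro conjI allI impI ballI)
     (auto simp: top_rev_evol_family_gen_fun in_PGF_gen_fun branching_kernels_of_top_rev_evol_family
       split: prod.splits)

end
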